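(* Let $w\in S_n$ and $I\subseteq\mathrm{CInv}(w)$ nonempty. Choose $(w(i),w(j))\in I$ with $w(j)$ minimal, and let $w'$ be the permutation obtained by removing the covering inversion $(w(i),w(j))$ from $w$. Then $I\setminus\{(w(i),w(j))\}\subseteq\mathrm{CInv}(w')$.
   Context: Permutations are in one-line notation. A covering inversion of $w\in S_n$ is a pair of values $(w(i),w(j))$ with $i<j$, $w(i)>w(j)$, and $w(k)<w(j)$ for all $i<k<j$ (equivalently, $i$ is maximal among positions $i<j$ with $w(i)>w(j)$). $\mathrm{CInv}(w)$ is the set of covering inversions of $w$. Removing the covering inversion $(w(i),w(j))$ from $w$ means forming the permutation $w'$ obtained from $w$ by exchanging the values in positions $i$ and $j$. *)

theory Defs
  imports "HOL-Combinatorics.Permutations"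
begin

text \<open>Permutations of S_n are functions w :: nat => nat with w permutes {1..n};
  one-line notation: position i carries the value w i.\<close>

definition CInv :: "nat \<Rightarrow> (nat \<Rightarrow> nat) \<Rightarrow> (nat \<times> nat) set" where
  "CInv n w = {(w i, w j) | i j. i \<in> {1..n} \<and> j \<in> {1..n} \<and> i < j \<and> w j < w i \<and>
                  (\<forall>k. i < k \<and> k < j \<longrightarrow> w k < w j)}"

definition remove_cinv :: "(nat \<Rightarrow> nat) \<Rightarrow> nat \<Rightarrow> nat \<Rightarrow> (nat \<Rightarrow> nat)" where
  "remove_cinv w i j = w(i := w j, j := w i)"

end

theory Submission
  imports Defs
begin

text \<open>Removing the covering inversion at positions \<open>i < j\<close> means composing \<open>w\<close> with the
  transposition \<open>\<tau>\<close> of \<open>i\<close> and \<open>j\<close>. A covering inversion at positions \<open>a < b\<close> with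
  \<open>w j < w b\<close> then survives at the positions \<open>\<tau> a < \<tau> b\<close>: the only value moved into the
  window between them that could exceed \<open>w b\<close> is \<open>w i\<close>, which lands in it only when
  \<open>a < i < j < b\<close>, and then \<open>w i < w b\<close> because \<open>(w a, w b)\<close> is covering. Minimality of
  \<open>w j\<close> gives \<open>w j < w b\<close>, since two covering inversions sharing their second position
  coincide.\<close>

definition is_covering_inversion :: "nat \<Rightarrow> (nat \<Rightarrow> nat) \<Rightarrow> nat \<Rightarrow> nat \<Rightarrow> bool" where
  "is_covering_inversion n w i j \<longleftrightarrow> i \<in> {1..n} \<and> j \<in> {1..n} \<and> i < j \<and> w j < w i \<and>
     (\<forall>k. i < k \<and> k < j \<longrightarrow> w k < w j)"

lemma mem_CInv_iff:
  "p \<in> CInv n w \<longleftrightarrow> (\<exists>i j. p = (w i, w j) \<and> is_covering_inversion n w i j)"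
  unfolding CInv_def is_covering_inversion_def by blast

lemma is_covering_inversion_if_mem_CInv:
  assumes "inj w" and "(w i, w j) \<in> CInv n w"
  shows "is_covering_inversion n w i j"
  using assms by (auto simp: mem_CInv_iff dest: injD)

lemma is_covering_inversion_upper_unique:
  assumes "is_covering_inversion n w a j" and "is_covering_inversion n w i j"
  shows "a = i"
proof (rule ccontr)
  assume "a \<noteq> i"
  then consider "a < i" | "i < a" by linarith
  then show False
    using assms unfolding is_covering_inversion_def by cases (meson less_asym)+
qed

lemma remove_cinv_eq_comp_transpose: "remove_cinv w i j = w \<circ> transpose i j"
  by (auto simp: remove_cinv_def transpose_def)

lemma is_covering_inversion_comp_transpose:
  assumes ij: "is_covering_inversion n w i j"
    and ab: "is_covering_inversion n w a b"
    and "w j < w b"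
  defines "\<tau> \<equiv> transpose i j"
  shows "is_covering_inversion n (w \<circ> \<tau>) (\<tau> a) (\<tau> b)"
proof -
  have "i < j" and cov_ij: "\<And>k. i < k \<Longrightarrow> k < j \<Longrightarrow> w k < w j"
    using ij by (auto simp: is_covering_inversion_def)
  have "a < b" "w b < w a" and cov_ab: "\<And>k. a < k \<Longrightarrow> k < b \<Longrightarrow> w k < w b"
    using ab by (auto simp: is_covering_inversion_def)
  have "a \<noteq> j" "b \<noteq> j"
    using \<open>w j < w b\<close> \<open>w b < w a\<close> by auto
  then have \<tau>a: "\<tau> a = (if a = i then j else a)" and \<tau>b: "\<tau> b = (if b = i then j else b)"
    by (auto simp: \<tau>_def)
  have "j < b" if "a = i"
  proof (rule ccontr)
    assume "\<not> j < b"
    then have "b < j" using \<open>b \<noteq> j\<close> by linarith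
    then show False using cov_ij[of b] \<open>a < b\<close> that \<open>w j < w b\<close> by auto
  qed
  then have "\<tau> a < \<tau> b"
    using \<tau>a \<tau>b \<open>a < b\<close> \<open>i < j\<close> by auto
  have window: "w (\<tau> k) < w b" if k: "\<tau> a < k" "k < \<tau> b" for k
  proof -
    consider "k = i" | "k = j" | "k \<noteq> i" "k \<noteq> j" by blast
    then show ?thesis
    proof cases
      case 1
      then show ?thesis using \<open>w j < w b\<close> by (simp add: \<tau>_def)
    next
      case 2
      then have "a < j" "j < b" "a \<noteq> i"
        using k \<tau>a \<tau>b by (auto split: if_splits)
      then consider "a < i" | "i < a" by linarith
      then have "w i < w b"
      proof cases
        case 1
        then show ?thesis using cov_ab \<open>i < j\<close> \<open>j < b\<close> by auto
      next
        case 2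
        then show ?thesis using cov_ij[of a] \<open>a < j\<close> \<open>w j < w b\<close> \<open>w b < w a\<close> by auto
      qed
      with 2 show ?thesis by (simp add: \<tau>_def)
    next
      case 3
      then have "a < k \<and> k < b \<or> i < k \<and> k < j"
        using k \<tau>a \<tau>b \<open>i < j\<close> \<open>a < b\<close> by (auto split: if_splits)
      then have "w k < w b"
        using cov_ab cov_ij \<open>w j < w b\<close> by (meson less_trans)
      with 3 show ?thesis by (simp add: \<tau>_def)
    qed
  qed
  have "\<tau> a \<in> {1..n}" "\<tau> b \<in> {1..n}"
    using ij ab \<tau>a \<tau>b by (auto simp: is_covering_inversion_def)
  with \<open>\<tau> a < \<tau> b\<close> window \<open>w b < w a\<close> show ?thesis
    by (simp add: is_covering_inversion_def \<tau>_def)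
qed

theorem lemma5p6:
  fixes n :: nat and w :: "nat \<Rightarrow> nat" and I :: "(nat \<times> nat) set" and i j :: nat
  assumes "w permutes {1..n}"
    and "I \<subseteq> CInv n w"
    and "i \<in> {1..n}" and "j \<in> {1..n}"
    and "(w i, w j) \<in> I"
    and "\<forall>p\<in>I. w j \<le> snd p"
  shows "I - {(w i, w j)} \<subseteq> CInv n (remove_cinv w i j)"
proof
  fix p assume p: "p \<in> I - {(w i, w j)}"
  have "inj w" using assms(1) by (rule permutes_inj)
  have ij: "is_covering_inversion n w i j"
    using is_covering_inversion_if_mem_CInv[OF \<open>inj w\<close>] assms(2,5) by blast
  have "p \<in> CInv n w" using p assms(2) by blast
  then obtain a b where p_ab: "p = (w a, w b)" and ab: "is_covering_inversion n w a b"
    by (auto simp: mem_CInv_iff)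
  have "b \<noteq> j"
    using is_covering_inversion_upper_unique[OF ab] ij p p_ab by blast
  then have "w j < w b"
    using assms(6) p p_ab \<open>inj w\<close> by (metis DiffD1 inj_eq le_neq_implies_less snd_conv)
  then have "is_covering_inversion n (w \<circ> transpose i j) (transpose i j a) (transpose i j b)"
    using is_covering_inversion_comp_transpose[OF ij ab] by blast
  then show "p \<in> CInv n (remove_cinv w i j)"
    unfolding remove_cinv_eq_comp_transpose mem_CInv_iff p_ab by force
qed

end
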